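(* Let $M$ be a compact Riemannian manifold and $f\colon M\to M$ a $C^1$ map. For every open cover $(U_i)_i$ of $(\overleftarrow M_f,d_1)$ there exists a partition of unity $(\rho_i)_i$ subordinate to it such that each $\rho_i\colon\overleftarrow M_f\to\mathbb R$ is $d_1$-continuous and $d_\infty$-Lipschitz.
   Context: $\overleftarrow M_f=\{(x_n)_{n\in\mathbb Z}\in M^{\mathbb Z}: f(x_n)=x_{n+1}\ \forall n\}$ with $d_1(\underline x,\underline y)=\sum_n2^{-|n|}d(x_n,y_n)$ and $d_\infty(\underline x,\underline y)=\sup_n d(x_n,y_n)$. *)

theory Defs
  imports "HOL-Analysis.Analysis"
begin

definition invlim :: "'a set \<Rightarrow> ('a \<Rightarrow> 'a) \<Rightarrow> (int \<Rightarrow> 'a) set" where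
  "invlim M f = {x. (\<forall>n. x n \<in> M) \<and> (\<forall>n. f (x n) = x (n + 1))}"

definition d1 :: "(int \<Rightarrow> 'a::metric_space) \<Rightarrow> (int \<Rightarrow> 'a) \<Rightarrow> real" where
  "d1 x y = (\<Sum>\<^sub>\<infinity> n\<in>(UNIV::int set). (1/2) ^ nat \<bar>n\<bar> * dist (x n) (y n))"

definition dinf :: "(int \<Rightarrow> 'a::metric_space) \<Rightarrow> (int \<Rightarrow> 'a) \<Rightarrow> real" where
  "dinf x y = (SUP n. dist (x n) (y n))"

definition d1_top :: "'a::metric_space set \<Rightarrow> ('a \<Rightarrow> 'a) \<Rightarrow> (int \<Rightarrow> 'a) topology" where
  "d1_top M f = Metric_space.mtopology (invlim M f) d1"

definition tsupport :: "'b topology \<Rightarrow> ('b \<Rightarrow> real) \<Rightarrow> 'b set" where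
  "tsupport T g = T closure_of {x \<in> topspace T. g x \<noteq> 0}"

definition partition_of_unity_subordinate ::
    "'b topology \<Rightarrow> ('i \<Rightarrow> 'b set) \<Rightarrow> ('i \<Rightarrow> 'b \<Rightarrow> real) \<Rightarrow> bool" where
  "partition_of_unity_subordinate T U \<rho> \<longleftrightarrow>
     (\<forall>i. continuous_map T euclideanreal (\<rho> i)) \<and>
     (\<forall>i. \<forall>x\<in>topspace T. 0 \<le> \<rho> i x) \<and>
     (\<forall>i. tsupport T (\<rho> i) \<subseteq> U i) \<and>
     (\<forall>x\<in>topspace T. \<exists>V. openin T V \<and> x \<in> V \<and>
         finite {i. tsupport T (\<rho> i) \<inter> V \<noteq> {}}) \<and>
     (\<forall>x\<in>topspace T. (\<Sum>i\<in>{i. \<rho> i x \<noteq> 0}. \<rho> i x) = 1)"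

end

theory Submission
  imports Defs
begin

text \<open>
  On a compact metric space every open cover admits a finite partition of unity by Lipschitz
  functions: cover the space by finitely many balls whose doubles (with some room to spare) lie in
  the cover, take the hat functions \<open>max 0 (2 r - d(\<cdot>, c))\<close>, which are 1-Lipschitz and at least
  \<open>r\<close> on the ball of radius \<open>r\<close>, and normalise; the denominator is then bounded below uniformly.
  The inverse limit with \<open>d\<^sub>1\<close> is compact, being a closed subspace of the compact product
  \<open>M\<^sup>\<int>\<close> on which \<open>d\<^sub>1\<close> induces the product topology; and \<open>d\<^sub>1 \<le> 3 d\<^sub>\<infinity>\<close>, so \<open>d\<^sub>1\<close>-Lipschitz
  functions are \<open>d\<^sub>\<infinity>\<close>-Lipschitz.
\<close>

section \<open>Lipschitz partitions of unity on compact metric spaces\<close>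

lemma abs_divide_diff_le:
  fixes a a' b b' D m :: real
  assumes "0 < m" "m \<le> b" "m \<le> b'" "0 \<le> a" "a \<le> b"
    and "\<bar>a - a'\<bar> \<le> D" "\<bar>b - b'\<bar> \<le> D"
  shows "\<bar>a / b - a' / b'\<bar> \<le> 2 * D / m"
proof -
  have b: "b > 0" "b' > 0" and D: "D \<ge> 0" using assms by linarith+
  have "\<bar>a * (b' - b) + b * (a - a')\<bar> \<le> a * D + b * D"
    using assms b by (intro order.trans[OF abs_triangle_ineq] add_mono)
      (auto simp: abs_mult abs_minus_commute intro: mult_left_mono)
  moreover have "a * D \<le> b * D"
    using assms(5) D by (rule mult_right_mono)
  ultimately have num: "\<bar>a * (b' - b) + b * (a - a')\<bar> \<le> 2 * b * D" by linarith
  have "\<bar>a / b - a' / b'\<bar> = \<bar>a * (b' - b) + b * (a - a')\<bar> / (b * b')"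
    using b by (simp add: field_simps abs_divide)
  also have "\<dots> \<le> 2 * b * D / (b * b')"
    using num b by (intro divide_right_mono) auto
  also have "\<dots> = 2 * D / b'" using b by simp
  also have "\<dots> \<le> 2 * D / m"
    using assms D by (intro divide_left_mono) auto
  finally show ?thesis .
qed

lemma (in Metric_space) continuous_map_if_lipschitz:
  assumes "\<And>x y. x \<in> M \<Longrightarrow> y \<in> M \<Longrightarrow> \<bar>g x - g y\<bar> \<le> K * d x y"
  shows "continuous_map mtopology euclideanreal g"
proof -
  have "Lipschitz_continuous_map (metric (M, d)) euclidean_metric g"
    unfolding Lipschitz_continuous_map_def using assms by (auto simp: dist_real_def)
  then show ?thesis
    using Lipschitz_continuous_imp_continuous_map by fastforce
qed

lemma (in Metric_space) finite_ball_cover_inside_open_cover: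
  assumes "compact_space mtopology" and "\<And>i. openin mtopology (U i)" and "(\<Union>i. U i) = M"
  obtains C r ix where "finite C" "C \<subseteq> M"
    "\<And>c. c \<in> C \<Longrightarrow> r c > 0 \<and> mcball c (2 * r c) \<subseteq> U (ix c)"
    "\<And>y. y \<in> M \<Longrightarrow> \<exists>c\<in>C. d c y < r c"
proof -
  have "\<exists>i r. r > 0 \<and> mcball x (2 * r) \<subseteq> U i" if x: "x \<in> M" for x
  proof -
    obtain i where "x \<in> U i" using assms(3) x by blast
    then obtain r where "r > 0" "mball x r \<subseteq> U i" using assms(2) openin_mtopology by blast
    moreover have "mcball x (2 * (r / 3)) \<subseteq> mball x r"
      using \<open>r > 0\<close> by (intro mcball_subset_mball_concentric) auto
    ultimately show ?thesis by (metis divide_pos_pos order.trans zero_less_numeral)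
  qed
  then obtain r ix where rix: "\<And>x. x \<in> M \<Longrightarrow> r x > 0 \<and> mcball x (2 * r x) \<subseteq> U (ix x)"
    by metis
  have "M \<subseteq> \<Union> ((\<lambda>x. mball x (r x)) ` M)" using rix by force
  moreover have "\<forall>V\<in>(\<lambda>x. mball x (r x)) ` M. openin mtopology V" by auto
  ultimately obtain F where F: "finite F" "F \<subseteq> (\<lambda>x. mball x (r x)) ` M" "M \<subseteq> \<Union>F"
    using assms(1) unfolding compact_space_def compactin_def by (metis topspace_mtopology)
  then obtain C where C: "finite C" "C \<subseteq> M" "F = (\<lambda>x. mball x (r x)) ` C"
    by (meson finite_subset_image)
  show thesis
  proof (rule that[of C r ix])
    show "\<exists>c\<in>C. d c y < r c" if "y \<in> M" for y
    proof -
      have "y \<in> (\<Union>x\<in>C. mball x (r x))" using F(3) C(3) that by blast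
      then show ?thesis by auto
    qed
    show "r c > 0 \<and> mcball c (2 * r c) \<subseteq> U (ix c)" if "c \<in> C" for c
      using C(2) rix that by blast
  qed (use C in auto)
qed

definition normalized_bumps ::
    "'c set \<Rightarrow> ('c \<Rightarrow> 'i) \<Rightarrow> ('c \<Rightarrow> 'a \<Rightarrow> real) \<Rightarrow> 'i \<Rightarrow> 'a \<Rightarrow> real" where
  "normalized_bumps C ix h i x = (\<Sum>c\<in>{c\<in>C. ix c = i}. h c x) / (\<Sum>c\<in>C. h c x)"

lemma normalized_bumps_eq_0: "i \<notin> ix ` C \<Longrightarrow> normalized_bumps C ix h i x = 0"
  by (auto simp: normalized_bumps_def intro: sum.neutral)

lemma normalized_bumps_nonzero_imp:
  "normalized_bumps C ix h i x \<noteq> 0 \<Longrightarrow> \<exists>c\<in>C. ix c = i \<and> h c x \<noteq> 0"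
  unfolding normalized_bumps_def by (metis (mono_tags, lifting) div_0 mem_Collect_eq sum.neutral)

lemma sum_normalized_bumps:
  assumes "finite C" and "(\<Sum>c\<in>C. h c x) \<noteq> 0"
  shows "(\<Sum>i\<in>{i. normalized_bumps C ix h i x \<noteq> 0}. normalized_bumps C ix h i x) = 1"
proof -
  have "(\<Sum>i\<in>{i. normalized_bumps C ix h i x \<noteq> 0}. normalized_bumps C ix h i x)
      = (\<Sum>i\<in>ix ` C. normalized_bumps C ix h i x)"
    using assms(1) by (intro sum.mono_neutral_left) (auto dest: normalized_bumps_nonzero_imp)
  also have "\<dots> = (\<Sum>i\<in>ix ` C. \<Sum>c\<in>{c\<in>C. ix c = i}. h c x) / (\<Sum>c\<in>C. h c x)"
    by (simp add: normalized_bumps_def sum_divide_distrib)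
  also have "(\<Sum>i\<in>ix ` C. \<Sum>c\<in>{c\<in>C. ix c = i}. h c x) = (\<Sum>c\<in>C. h c x)"
    using sum.image_gen[OF assms(1), of "\<lambda>c. h c x" ix] by simp
  finally show ?thesis using assms(2) by simp
qed

lemma partition_of_unity_normalized_bumps:
  assumes "finite C"
    and cont: "\<And>c. c \<in> C \<Longrightarrow> continuous_map T euclideanreal (h c)"
    and nonneg: "\<And>c x. c \<in> C \<Longrightarrow> x \<in> topspace T \<Longrightarrow> 0 \<le> h c x"
    and pos: "\<And>x. x \<in> topspace T \<Longrightarrow> 0 < (\<Sum>c\<in>C. h c x)"
    and K: "\<And>c. c \<in> C \<Longrightarrow> closedin T (K c) \<and> K c \<subseteq> U (ix c)"
    and supp: "\<And>c x. c \<in> C \<Longrightarrow> x \<in> topspace T \<Longrightarrow> h c x \<noteq> 0 \<Longrightarrow> x \<in> K c"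
  shows "partition_of_unity_subordinate T U (normalized_bumps C ix h)"
  unfolding partition_of_unity_subordinate_def
proof (intro conjI allI ballI)
  fix i
  show "continuous_map T euclideanreal (normalized_bumps C ix h i)"
    unfolding normalized_bumps_def using assms(1) cont pos
    by (intro continuous_map_real_divide continuous_map_sum) (auto dest: less_imp_neq[symmetric])
  have "{x \<in> topspace T. normalized_bumps C ix h i x \<noteq> 0} \<subseteq> (\<Union>c\<in>{c\<in>C. ix c = i}. K c)"
    using normalized_bumps_nonzero_imp supp by fastforce
  moreover have "closedin T (\<Union>c\<in>{c\<in>C. ix c = i}. K c)"
    using assms(1) K by (intro closedin_Union) auto
  ultimately have "tsupport T (normalized_bumps C ix h i) \<subseteq> (\<Union>c\<in>{c\<in>C. ix c = i}. K c)"
    unfolding tsupport_def by (rule closure_of_minimal)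
  then show "tsupport T (normalized_bumps C ix h i) \<subseteq> U i" using K by fastforce
  fix x assume x: "x \<in> topspace T"
  show "0 \<le> normalized_bumps C ix h i x"
    unfolding normalized_bumps_def using nonneg x pos[OF x]
    by (intro divide_nonneg_nonneg sum_nonneg) (auto simp: less_imp_le)
next
  fix x assume x: "x \<in> topspace T"
  have "tsupport T (normalized_bumps C ix h i) = {}" if "i \<notin> ix ` C" for i
    using that by (simp add: tsupport_def normalized_bumps_eq_0)
  then have "{i. tsupport T (normalized_bumps C ix h i) \<inter> topspace T \<noteq> {}} \<subseteq> ix ` C"
    by blast
  then show "\<exists>V. openin T V \<and> x \<in> V \<and> finite {i. tsupport T (normalized_bumps C ix h i) \<inter> V \<noteq> {}}"
    using x finite_subset[OF _ finite_imageI[OF assms(1)]] by (intro exI[of _ "topspace T"]) auto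
  show "(\<Sum>i\<in>{i. normalized_bumps C ix h i x \<noteq> 0}. normalized_bumps C ix h i x) = 1"
    using assms(1) pos[OF x] by (intro sum_normalized_bumps) auto
qed

lemma (in Metric_space) normalized_bumps_lipschitz:
  assumes "finite C" and "0 < m"
    and nonneg: "\<And>c x. c \<in> C \<Longrightarrow> x \<in> M \<Longrightarrow> 0 \<le> h c x"
    and lip: "\<And>c x y. c \<in> C \<Longrightarrow> x \<in> M \<Longrightarrow> y \<in> M \<Longrightarrow> \<bar>h c x - h c y\<bar> \<le> d x y"
    and lower: "\<And>x. x \<in> M \<Longrightarrow> m \<le> (\<Sum>c\<in>C. h c x)"
    and "x \<in> M" "y \<in> M"
  shows "\<bar>normalized_bumps C ix h i x - normalized_bumps C ix h i y\<bar> \<le> 2 * card C / m * d x y"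
proof -
  have sum_lip: "\<bar>(\<Sum>c\<in>S. h c x) - (\<Sum>c\<in>S. h c y)\<bar> \<le> card C * d x y" if "S \<subseteq> C" for S
  proof -
    have "\<bar>(\<Sum>c\<in>S. h c x) - (\<Sum>c\<in>S. h c y)\<bar> \<le> (\<Sum>c\<in>S. \<bar>h c x - h c y\<bar>)"
      by (metis sum_abs sum_subtractf)
    also have "\<dots> \<le> card S * d x y"
      using sum_mono[of S "\<lambda>c. \<bar>h c x - h c y\<bar>" "\<lambda>_. d x y"] lip that assms(6,7) by auto
    also have "\<dots> \<le> card C * d x y"
      using card_mono[OF assms(1) that] by (intro mult_right_mono) auto
    finally show ?thesis .
  qed
  have "\<bar>normalized_bumps C ix h i x - normalized_bumps C ix h i y\<bar> \<le> 2 * (card C * d x y) / m"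
    unfolding normalized_bumps_def
  proof (rule abs_divide_diff_le)
    show "0 \<le> (\<Sum>c\<in>{c\<in>C. ix c = i}. h c x)" "(\<Sum>c\<in>{c\<in>C. ix c = i}. h c x) \<le> (\<Sum>c\<in>C. h c x)"
      using assms(1) nonneg assms(6) by (auto intro: sum_nonneg sum_mono2)
  qed (use assms sum_lip in auto)
  then show ?thesis by simp
qed

lemma (in Metric_space) lipschitz_partition_of_unity:
  assumes "compact_space mtopology" and "\<And>i. openin mtopology (U i)" and "(\<Union>i. U i) = M"
  shows "\<exists>\<rho>. partition_of_unity_subordinate mtopology U \<rho> \<and>
             (\<forall>i. \<exists>K. \<forall>x\<in>M. \<forall>y\<in>M. \<bar>\<rho> i x - \<rho> i y\<bar> \<le> K * d x y)"
proof -
  obtain C r ix where C: "finite C" "C \<subseteq> M"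
      and r: "\<And>c. c \<in> C \<Longrightarrow> r c > 0 \<and> mcball c (2 * r c) \<subseteq> U (ix c)"
      and cover: "\<And>y. y \<in> M \<Longrightarrow> \<exists>c\<in>C. d c y < r c"
    using finite_ball_cover_inside_open_cover[OF assms] by blast
  define h where "h c y = max 0 (2 * r c - d y c)" for c y
  define m where "m = Min (insert 1 (r ` C))"
  have m: "0 < m" "\<And>c. c \<in> C \<Longrightarrow> m \<le> r c"
    using C(1) r by (auto simp: m_def)
  have h_lip: "\<bar>h c x - h c y\<bar> \<le> d x y" if "c \<in> C" "x \<in> M" "y \<in> M" for c x y
    using mdist_reverse_triangle[of x c y] that C(2) commute[of c y] by (auto simp: h_def)
  have h_lower: "m \<le> (\<Sum>c\<in>C. h c y)" if y: "y \<in> M" for y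
  proof -
    obtain c where c: "c \<in> C" "d c y < r c" using cover[OF y] by blast
    have "m \<le> h c y" using m(2)[OF c(1)] c(2) commute[of c y] by (simp add: h_def)
    also have "\<dots> \<le> (\<Sum>c\<in>C. h c y)"
      using C(1) c(1) by (intro member_le_sum) (auto simp: h_def)
    finally show ?thesis .
  qed
  have "partition_of_unity_subordinate mtopology U (normalized_bumps C ix h)"
  proof (rule partition_of_unity_normalized_bumps[where K = "\<lambda>c. mcball c (2 * r c)"])
    show "continuous_map mtopology euclideanreal (h c)" if "c \<in> C" for c
      using h_lip that by (intro continuous_map_if_lipschitz[where K = 1]) auto
    show "x \<in> mcball c (2 * r c)" if "c \<in> C" "x \<in> topspace mtopology" "h c x \<noteq> 0" for c x
      using that C(2) commute[of c x] by (auto simp: h_def split: if_splits)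
    show "0 < (\<Sum>c\<in>C. h c x)" if "x \<in> topspace mtopology" for x
      using h_lower[of x] m(1) that by simp
  qed (use C(1) r in \<open>auto simp: h_def\<close>)
  moreover have "\<bar>normalized_bumps C ix h i x - normalized_bumps C ix h i y\<bar> \<le> 2 * card C / m * d x y"
    if "x \<in> M" "y \<in> M" for i x y
    using C(1) m(1) h_lip h_lower that by (intro normalized_bumps_lipschitz) (auto simp: h_def)
  ultimately show ?thesis by blast
qed

section \<open>The metric \<open>d\<^sub>1\<close> on two-sided sequences and the inverse limit\<close>

definition weight :: "int \<Rightarrow> real" where
  "weight n = (1/2) ^ nat \<bar>n\<bar>"

lemma weight_pos: "0 < weight n"
  by (simp add: weight_def)

lemma weight_nonneg: "0 \<le> weight n"
  by (simp add: weight_def)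

lemma weight_le_1: "weight n \<le> 1"
  by (simp add: weight_def power_le_one)

lemma sum_weight_symmetric_interval: "(\<Sum>n\<in>{-int N..int N}. weight n) = 3 - 2 * (1/2) ^ N"
proof (induction N)
  case 0
  then show ?case by (simp add: weight_def)
next
  case (Suc N)
  have "{-int (Suc N)..int (Suc N)} = insert (-int (Suc N)) (insert (int (Suc N)) {-int N..int N})"
    by auto
  moreover have "weight (-int (Suc N)) = (1/2) ^ Suc N" "weight (int (Suc N)) = (1/2) ^ Suc N"
    unfolding weight_def by (simp_all del: of_nat_Suc)
  ultimately show ?case using Suc by simp
qed

lemma sum_weight_le_3:
  assumes "finite F"
  shows "sum weight F \<le> 3"
proof -
  define N where "N = Max (insert 0 ((\<lambda>n. nat \<bar>n\<bar>) ` F))"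
  have "nat \<bar>n\<bar> \<le> N" if "n \<in> F" for n
    unfolding N_def using assms that by (intro Max_ge) auto
  then have "F \<subseteq> {-int N..int N}"
    by fastforce
  then have "sum weight F \<le> (\<Sum>n\<in>{-int N..int N}. weight n)"
    using weight_nonneg by (intro sum_mono2) auto
  also have "\<dots> \<le> 3" by (simp add: sum_weight_symmetric_interval)
  finally show ?thesis .
qed

lemma summable_on_weight: "weight summable_on A"
proof -
  have "weight summable_on UNIV"
    using sum_weight_le_3 weight_nonneg by (intro nonneg_bdd_above_summable_on bdd_aboveI) auto
  then show ?thesis by (rule summable_on_subset) simp
qed

lemma infsum_weight_le_3: "infsum weight UNIV \<le> 3"
  using summable_on_weight sum_weight_le_3 by (rule infsum_le_finite_sums)

lemma infsum_weight_tail_small: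
  assumes "0 < e"
  obtains F where "finite F" "infsum weight (- F) \<le> e"
proof -
  obtain F where F: "finite F" "dist (sum weight F) (infsum weight UNIV) \<le> e"
    using infsum_finite_approximation[OF summable_on_weight assms] by blast
  have "infsum weight UNIV = sum weight F + infsum weight (- F)"
    using infsum_Un_disjoint[OF summable_on_weight summable_on_weight, of F "- F"] F(1)
    by (simp add: Un_commute)
  with F show thesis by (intro that[of F]) (auto simp: dist_real_def)
qed

lemma d1_eq_infsum_weight: "d1 x y = infsum (\<lambda>n. weight n * dist (x n) (y n)) UNIV"
  by (simp add: d1_def weight_def)

lemma d1_nonneg: "0 \<le> d1 x y"
  unfolding d1_eq_infsum_weight by (intro infsum_nonneg) (simp add: weight_nonneg)

context
  fixes M :: "'a::metric_space set"
  assumes bounded: "bounded M"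
begin

lemma weighted_dist_summable_on:
  assumes "x \<in> UNIV \<rightarrow> M" "y \<in> UNIV \<rightarrow> M"
  shows "(\<lambda>n. weight n * dist (x n) (y n)) summable_on A"
proof (rule summable_on_comparison_test)
  show "(\<lambda>n. weight n * diameter M) summable_on A"
    by (rule summable_on_cmult_left[OF summable_on_weight])
  show "weight n * dist (x n) (y n) \<le> weight n * diameter M" for n
    using assms diameter_bounded_bound[OF bounded] weight_nonneg[of n]
    by (auto intro: mult_left_mono simp: Pi_iff)
  show "0 \<le> weight n * dist (x n) (y n)" for n
    by (simp add: weight_nonneg)
qed

lemma weighted_dist_le_d1:
  assumes "x \<in> UNIV \<rightarrow> M" "y \<in> UNIV \<rightarrow> M"
  shows "weight n * dist (x n) (y n) \<le> d1 x y"
proof -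
  have "infsum (\<lambda>n. weight n * dist (x n) (y n)) {n} \<le> infsum (\<lambda>n. weight n * dist (x n) (y n)) UNIV"
    by (intro infsum_mono_neutral weighted_dist_summable_on[OF assms]) (auto simp: weight_nonneg)
  then show ?thesis by (simp add: d1_eq_infsum_weight)
qed

lemma Metric_space_d1: "Metric_space (UNIV \<rightarrow> M) d1"
proof
  show "0 \<le> d1 x y" for x y by (rule d1_nonneg)
  show "d1 x y = d1 y x" for x y by (simp add: d1_def dist_commute)
  show "d1 x y = 0 \<longleftrightarrow> x = y" if "x \<in> UNIV \<rightarrow> M" "y \<in> UNIV \<rightarrow> M" for x y
  proof
    assume "d1 x y = 0"
    then have le_0: "weight n * dist (x n) (y n) \<le> 0" for n
      using weighted_dist_le_d1[OF that] by metis
    have "dist (x n) (y n) \<le> 0" for n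
      using le_0[of n] weight_pos[of n] by (simp add: mult_le_0_iff)
    then show "x = y" by (simp add: fun_eq_iff)
  qed (simp add: d1_def)
  show "d1 x z \<le> d1 x y + d1 y z"
    if "x \<in> UNIV \<rightarrow> M" "y \<in> UNIV \<rightarrow> M" "z \<in> UNIV \<rightarrow> M" for x y z
  proof -
    have "weight n * dist (x n) (z n) \<le> weight n * dist (x n) (y n) + weight n * dist (y n) (z n)"
      for n
      using mult_left_mono[OF dist_triangle[of "x n" "z n" "y n"] weight_nonneg[of n]]
      by (simp add: distrib_left)
    then have "d1 x z \<le> infsum (\<lambda>n. weight n * dist (x n) (y n) + weight n * dist (y n) (z n)) UNIV"
      unfolding d1_eq_infsum_weight using that
      by (intro infsum_mono summable_on_add weighted_dist_summable_on)
    also have "\<dots> = d1 x y + d1 y z"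
      unfolding d1_eq_infsum_weight using that
      by (intro infsum_add weighted_dist_summable_on)
    finally show ?thesis .
  qed
qed

lemma d1_le_dinf:
  assumes "x \<in> UNIV \<rightarrow> M" "y \<in> UNIV \<rightarrow> M"
  shows "d1 x y \<le> 3 * dinf x y"
proof -
  have dist_le: "dist (x n) (y n) \<le> dinf x y" for n
    unfolding dinf_def using assms diameter_bounded_bound[OF bounded]
    by (intro cSUP_upper bdd_aboveI) (auto simp: Pi_iff)
  then have "0 \<le> dinf x y" by (metis zero_le_dist order.trans)
  have "d1 x y \<le> infsum (\<lambda>n. weight n * dinf x y) UNIV"
    unfolding d1_eq_infsum_weight using assms weight_nonneg dist_le
    by (intro infsum_mono weighted_dist_summable_on summable_on_cmult_left summable_on_weight)
      (auto intro: mult_left_mono)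
  also have "\<dots> = infsum weight UNIV * dinf x y"
    by (intro infsum_cmult_left summable_on_weight)
  also have "\<dots> \<le> 3 * dinf x y"
    using infsum_weight_le_3 \<open>0 \<le> dinf x y\<close> by (rule mult_right_mono)
  finally show ?thesis .
qed

lemma d1_le_finite_sum_plus_tail:
  assumes "finite F" "x \<in> UNIV \<rightarrow> M" "y \<in> UNIV \<rightarrow> M"
  shows "d1 x y \<le> (\<Sum>n\<in>F. dist (x n) (y n)) + infsum weight (- F) * diameter M"
proof -
  let ?g = "\<lambda>n. weight n * dist (x n) (y n)"
  have "d1 x y = sum ?g F + infsum ?g (- F)"
    using infsum_Un_disjoint[of ?g F "- F"] weighted_dist_summable_on[OF assms(2,3)] assms(1)
    by (simp add: d1_eq_infsum_weight Un_commute)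
  also have "sum ?g F \<le> (\<Sum>n\<in>F. dist (x n) (y n))"
    using weight_le_1 weight_nonneg by (intro sum_mono mult_left_le_one_le) auto
  also have "infsum ?g (- F) \<le> infsum (\<lambda>n. weight n * diameter M) (- F)"
    using assms(2,3) diameter_bounded_bound[OF bounded] weight_nonneg
    by (intro infsum_mono weighted_dist_summable_on[OF assms(2,3)]
        summable_on_cmult_left summable_on_weight) (auto intro: mult_left_mono simp: Pi_iff)
  also have "\<dots> = infsum weight (- F) * diameter M"
    by (intro infsum_cmult_left summable_on_weight)
  finally show ?thesis by simp
qed

lemma d1_tendsto_coordinatewise:
  assumes "\<And>k. x k \<in> UNIV \<rightarrow> M" "l \<in> UNIV \<rightarrow> M" and "\<And>n. (\<lambda>k. x k n) \<longlonglongrightarrow> l n"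
  shows "(\<lambda>k. d1 (x k) l) \<longlonglongrightarrow> 0"
proof (rule order_tendstoI)
  show "eventually (\<lambda>k. d1 (x k) l > e) sequentially" if "e < 0" for e :: real
    by (intro always_eventually allI less_le_trans[OF that d1_nonneg])
  fix e :: real assume "0 < e"
  define \<delta> where "\<delta> = e / (2 * (diameter M + 1))"
  have "0 < \<delta>" using \<open>0 < e\<close> diameter_ge_0[OF bounded] by (simp add: \<delta>_def)
  then obtain F where F: "finite F" "infsum weight (- F) \<le> \<delta>"
    using infsum_weight_tail_small by blast
  have tail: "infsum weight (- F) * diameter M < e / 2"
  proof -
    have "infsum weight (- F) * diameter M \<le> \<delta> * diameter M"
      using F(2) diameter_ge_0[OF bounded] by (rule mult_right_mono)
    also have "\<dots> < e / 2"
      using \<open>0 < e\<close> diameter_ge_0[OF bounded] by (simp add: \<delta>_def field_simps)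
    finally show ?thesis .
  qed
  have "(\<lambda>k. \<Sum>n\<in>F. dist (x k n) (l n)) \<longlonglongrightarrow> 0"
    using assms(3) by (intro tendsto_null_sum) (simp add: tendsto_dist_iff[symmetric])
  then have "eventually (\<lambda>k. (\<Sum>n\<in>F. dist (x k n) (l n)) < e / 2) sequentially"
    using \<open>0 < e\<close> by (intro order_tendstoD(2)) auto
  then show "eventually (\<lambda>k. d1 (x k) l < e) sequentially"
  proof (rule eventually_mono)
    fix k assume "(\<Sum>n\<in>F. dist (x k n) (l n)) < e / 2"
    then show "d1 (x k) l < e"
      using d1_le_finite_sum_plus_tail[OF F(1) assms(1)[of k] assms(2)] tail by linarith
  qed
qed

end

lemma invlim_subset_funcset: "invlim M f \<subseteq> UNIV \<rightarrow> M"
  by (auto simp: invlim_def)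

lemma Metric_space_invlim_d1: "bounded M \<Longrightarrow> Metric_space (invlim M f) d1"
  using Metric_space.subspace[OF Metric_space_d1 invlim_subset_funcset] .

lemma invlim_closed_under_coordinatewise_limits:
  fixes M :: "'a::t2_space set"
  assumes "closed M" "continuous_on M f"
    and "\<And>k. \<sigma> k \<in> invlim M f" "\<And>n. (\<lambda>k. \<sigma> k n) \<longlonglongrightarrow> l n"
  shows "l \<in> invlim M f"
  unfolding invlim_def
proof (intro CollectI conjI allI)
  have inM: "\<sigma> k n \<in> M" for k n using assms(3) by (auto simp: invlim_def)
  show lM: "l n \<in> M" for n
    using inM by (rule closed_sequentially[OF assms(1) _ assms(4)])
  fix n
  have "(\<lambda>k. f (\<sigma> k n)) \<longlonglongrightarrow> f (l n)"
    using continuous_on_tendsto_compose[OF assms(2) assms(4)] inM lM by auto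
  moreover have "(\<lambda>k. f (\<sigma> k n)) = (\<lambda>k. \<sigma> k (n + 1))"
    using assms(3) by (auto simp: invlim_def)
  ultimately have "(\<lambda>k. \<sigma> k (n + 1)) \<longlonglongrightarrow> f (l n)" by simp
  then show "f (l n) = l (n + 1)"
    using assms(4)[of "n + 1"] by (rule LIMSEQ_unique)
qed

lemma compact_space_d1_top:
  assumes "compact M" "continuous_on M f"
  shows "compact_space (d1_top M f)"
proof -
  interpret X: Metric_space "invlim M f" d1
    using assms(1) by (intro Metric_space_invlim_d1 compact_imp_bounded)
  have "compactin (product_topology (\<lambda>_. euclidean) UNIV) (PiE UNIV (\<lambda>_::int. M))"
    using assms(1) by (simp add: compactin_PiE)
  then have "seq_compact ((UNIV :: int set) \<rightarrow> M)"
    by (simp add: PiE_UNIV_domain euclidean_product_topology compact_imp_seq_compact)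
  show ?thesis
    unfolding d1_top_def X.compact_space_sequentially
  proof (intro allI impI)
    fix \<sigma> :: "nat \<Rightarrow> int \<Rightarrow> 'a" assume \<sigma>: "range \<sigma> \<subseteq> invlim M f"
    then have "\<forall>k. \<sigma> k \<in> UNIV \<rightarrow> M"
      using invlim_subset_funcset by blast
    then obtain l r where l: "l \<in> UNIV \<rightarrow> M" "strict_mono r" "(\<sigma> \<circ> r) \<longlonglongrightarrow> l"
      using \<open>seq_compact ((UNIV :: int set) \<rightarrow> M)\<close> unfolding seq_compact_def by metis
    have coord: "(\<lambda>k. (\<sigma> \<circ> r) k n) \<longlonglongrightarrow> l n" for n
      using continuous_on_tendsto_compose[OF continuous_on_product_coordinates l(3)] by simp
    have \<sigma>r: "(\<sigma> \<circ> r) k \<in> invlim M f" for k using \<sigma> by auto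
    have lX: "l \<in> invlim M f"
      by (rule invlim_closed_under_coordinatewise_limits[OF compact_imp_closed[OF assms(1)] assms(2) \<sigma>r coord])
    have d1_lim: "(\<lambda>k. d1 ((\<sigma> \<circ> r) k) l) \<longlonglongrightarrow> 0"
      using \<sigma>r invlim_subset_funcset l(1) coord
      by (intro d1_tendsto_coordinatewise[OF compact_imp_bounded[OF assms(1)]]) blast+
    have "limitin X.mtopology (\<sigma> \<circ> r) l sequentially"
      unfolding X.limitin_metric
    proof (intro conjI allI impI lX)
      fix e :: real assume "0 < e"
      with d1_lim have "eventually (\<lambda>k. d1 ((\<sigma> \<circ> r) k) l < e) sequentially"
        by (rule order_tendstoD(2))
      then show "eventually (\<lambda>k. (\<sigma> \<circ> r) k \<in> invlim M f \<and> d1 ((\<sigma> \<circ> r) k) l < e) sequentially"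
        using \<sigma>r by simp
    qed
    then show "\<exists>l r. l \<in> invlim M f \<and> strict_mono r \<and> limitin X.mtopology (\<sigma> \<circ> r) l sequentially"
      using lX l(2) by blast
  qed
qed

lemma lipschitz_d1_imp_lipschitz_dinf:
  assumes "bounded M" and lip: "\<forall>x\<in>invlim M f. \<forall>y\<in>invlim M f. \<bar>g x - g y\<bar> \<le> K * d1 x y"
  shows "\<exists>L. \<forall>x\<in>invlim M f. \<forall>y\<in>invlim M f. \<bar>g x - g y\<bar> \<le> L * dinf x y"
proof (intro exI ballI)
  fix x y assume x: "x \<in> invlim M f" and y: "y \<in> invlim M f"
  have "x \<in> UNIV \<rightarrow> M" "y \<in> UNIV \<rightarrow> M"
    using x y invlim_subset_funcset by blast+
  then have "d1 x y \<le> 3 * dinf x y"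
    by (rule d1_le_dinf[OF assms(1)])
  have "\<bar>g x - g y\<bar> \<le> K * d1 x y"
    using lip x y by blast
  also have "\<dots> \<le> \<bar>K\<bar> * d1 x y"
    by (intro mult_right_mono d1_nonneg) simp
  also have "\<dots> \<le> \<bar>K\<bar> * (3 * dinf x y)"
    using \<open>d1 x y \<le> 3 * dinf x y\<close> by (rule mult_left_mono) simp
  finally show "\<bar>g x - g y\<bar> \<le> (3 * \<bar>K\<bar>) * dinf x y" by simp
qed

theorem corollary2:
  fixes M :: "'a::metric_space set" and f :: "'a \<Rightarrow> 'a" and U :: "'i \<Rightarrow> (int \<Rightarrow> 'a) set"
  assumes "compact M" and "f ` M \<subseteq> M" and "continuous_on M f"
    and "\<exists>L. L-lipschitz_on M f"
    and "\<forall>i. openin (d1_top M f) (U i)"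
    and "(\<Union>i. U i) = invlim M f"
  shows "\<exists>\<rho>. partition_of_unity_subordinate (d1_top M f) U \<rho> \<and>
             (\<forall>i. \<exists>L. \<forall>x\<in>invlim M f. \<forall>y\<in>invlim M f.
                 \<bar>\<rho> i x - \<rho> i y\<bar> \<le> L * dinf x y)"
proof -
  have bounded: "bounded M" using assms(1) by (rule compact_imp_bounded)
  interpret X: Metric_space "invlim M f" d1
    using bounded by (rule Metric_space_invlim_d1)
  have top: "d1_top M f = X.mtopology" by (simp add: d1_top_def)
  have compact: "compact_space X.mtopology"
    using compact_space_d1_top[OF assms(1,3)] by (simp only: top)
  have open_cover: "openin X.mtopology (U i)" for i
    using assms(5) by (simp only: top)
  obtain \<rho> where part: "partition_of_unity_subordinate X.mtopology U \<rho>"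
      and lip: "\<forall>i. \<exists>K. \<forall>x\<in>invlim M f. \<forall>y\<in>invlim M f. \<bar>\<rho> i x - \<rho> i y\<bar> \<le> K * d1 x y"
    using X.lipschitz_partition_of_unity[OF compact open_cover assms(6)] by blast
  have "\<exists>L. \<forall>x\<in>invlim M f. \<forall>y\<in>invlim M f. \<bar>\<rho> i x - \<rho> i y\<bar> \<le> L * dinf x y" for i
  proof -
    obtain K where "\<forall>x\<in>invlim M f. \<forall>y\<in>invlim M f. \<bar>\<rho> i x - \<rho> i y\<bar> \<le> K * d1 x y"
      using lip by blast
    then show ?thesis by (rule lipschitz_d1_imp_lipschitz_dinf[OF bounded])
  qed
  then show ?thesis
    using part unfolding top by blast
qed

end
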